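(* Let $(X,d)$ be a compact metric space, $f_{1,\infty}$ an $m$-periodic sequence of continuous surjective self-maps of $X$, and $g=f_m\circ\cdots\circ f_1$. If the autonomous system $(X,g)$ is topologically transitive and has a dense set of periodic points, then $(X,f_{1,\infty})$ is Devaney chaotic.
   Context: $m$-periodic: $f_{n+m}=f_n$ for all $n$. Write $f_1^n=f_n\circ\cdots\circ f_1$. For the non-autonomous system: topologically transitive means for all non-empty open $U,V$ some $n$ with $f_1^n(U)\cap V\ne\emptyset$; a point $x$ is periodic if there is $n$ with $f_1^{nk}(x)=x$ for all $k\in\mathbb{N}$; sensitive means there is $\delta>0$ such that for every $x$ and neighbourhood $U$ of $x$ there exist $y\in U$, $n$ with $d(f_1^n(x),f_1^n(y))>\delta$; Devaney chaotic means topologically transitive, dense periodic points, and sensitive. For the autonomous system $(X,g)$ these notions are the usual ones with $g^n$ in place of $f_1^n$. *)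

theory Defs
  imports "HOL-Analysis.Analysis"
begin

fun nas_iter :: "(nat \<Rightarrow> 'a \<Rightarrow> 'a) \<Rightarrow> nat \<Rightarrow> 'a \<Rightarrow> 'a" where
  "nas_iter f 0 = id"
| "nas_iter f (Suc n) = f (Suc n) \<circ> nas_iter f n"

definition nas_transitive :: "'a::metric_space set \<Rightarrow> (nat \<Rightarrow> 'a \<Rightarrow> 'a) \<Rightarrow> bool" where
  "nas_transitive X f \<longleftrightarrow>
     (\<forall>U V. openin (top_of_set X) U \<longrightarrow> openin (top_of_set X) V \<longrightarrow> U \<noteq> {} \<longrightarrow> V \<noteq> {} \<longrightarrow>
        (\<exists>n>0. nas_iter f n ` U \<inter> V \<noteq> {}))"

definition nas_periodic_point :: "(nat \<Rightarrow> 'a \<Rightarrow> 'a) \<Rightarrow> 'a \<Rightarrow> bool" where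
  "nas_periodic_point f x \<longleftrightarrow> (\<exists>n>0. \<forall>k>0. nas_iter f (n * k) x = x)"

definition nas_dense_periodic :: "'a::metric_space set \<Rightarrow> (nat \<Rightarrow> 'a \<Rightarrow> 'a) \<Rightarrow> bool" where
  "nas_dense_periodic X f \<longleftrightarrow> X \<subseteq> closure {x \<in> X. nas_periodic_point f x}"

definition nas_sensitive :: "'a::metric_space set \<Rightarrow> (nat \<Rightarrow> 'a \<Rightarrow> 'a) \<Rightarrow> bool" where
  "nas_sensitive X f \<longleftrightarrow>
     (\<exists>\<delta>>0. \<forall>x\<in>X. \<forall>U. openin (top_of_set X) U \<longrightarrow> x \<in> U \<longrightarrow>
        (\<exists>y\<in>U. \<exists>n. dist (nas_iter f n x) (nas_iter f n y) > \<delta>))"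

definition nas_devaney_chaotic :: "'a::metric_space set \<Rightarrow> (nat \<Rightarrow> 'a \<Rightarrow> 'a) \<Rightarrow> bool" where
  "nas_devaney_chaotic X f \<longleftrightarrow> nas_transitive X f \<and> nas_dense_periodic X f \<and> nas_sensitive X f"

text \<open>Autonomous notions for (X,g): the constant sequence g, g, g, ... gives g^n.\<close>

definition aut_transitive :: "'a::metric_space set \<Rightarrow> ('a \<Rightarrow> 'a) \<Rightarrow> bool" where
  "aut_transitive X g \<longleftrightarrow>
     (\<forall>U V. openin (top_of_set X) U \<longrightarrow> openin (top_of_set X) V \<longrightarrow> U \<noteq> {} \<longrightarrow> V \<noteq> {} \<longrightarrow>
        (\<exists>n>0. (g ^^ n) ` U \<inter> V \<noteq> {}))"

definition aut_periodic_point :: "('a \<Rightarrow> 'a) \<Rightarrow> 'a \<Rightarrow> bool" where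
  "aut_periodic_point g x \<longleftrightarrow> (\<exists>n>0. (g ^^ n) x = x)"

definition aut_dense_periodic :: "'a::metric_space set \<Rightarrow> ('a \<Rightarrow> 'a) \<Rightarrow> bool" where
  "aut_dense_periodic X g \<longleftrightarrow> X \<subseteq> closure {x \<in> X. aut_periodic_point g x}"

end

theory Submission
  imports Defs
begin

text \<open>
  Over one period the non-autonomous system is the map \<open>g = f\<^sub>m \<circ> \<dots> \<circ> f\<^sub>1\<close>, so
  \<open>f\<^sub>1\<^sup>k\<^sup>m = g\<^sup>k\<close>; transitivity and density of periodic points of \<open>g\<close> therefore carry
  over directly. Sensitivity of \<open>g\<close> is the theorem of Banks et al.: in an infinite
  space two periodic points with disjoint orbits give a constant \<open>\<delta>\<close> such that every
  point is \<open>4\<delta>\<close>-far from one of the two orbits. Near any \<open>x\<close> pick a periodic point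
  \<open>p\<close> and, by transitivity, a point \<open>y\<close> that shadows the far orbit for one period of
  \<open>p\<close>; at a common time \<open>p\<close> has returned while \<open>y\<close> is still near the far orbit, so
  \<open>p\<close> and \<open>y\<close> are \<open>2\<delta>\<close> apart and one of them is \<open>\<delta>\<close> away from the orbit of \<open>x\<close>.
\<close>

subsection \<open>Periodic orbits\<close>

lemma funpow_mult_fixpoint:
  assumes "(g ^^ p) x = x"
  shows "(g ^^ (p * k)) x = x"
  using funpow_mod_eq[where f = g and n = p and m = "p * k", OF assms] by simp

lemma finite_orbit_if_periodic:
  assumes "p > 0" "(g ^^ p) x = x"
  shows "finite (range (\<lambda>i. (g ^^ i) x))"
proof -
  have "range (\<lambda>i. (g ^^ i) x) \<subseteq> (\<lambda>i. (g ^^ i) x) ` {..<p}"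
    using funpow_mod_eq[where f = g and n = p, OF assms(2)] assms(1)
    by (auto intro!: image_eqI[where x = "_ mod p"])
  then show ?thesis
    using finite_subset by blast
qed

lemma periodic_orbits_disjoint:
  assumes "p > 0" "(g ^^ p) y = y" "y \<notin> range (\<lambda>i. (g ^^ i) x)"
  shows "(g ^^ i) x \<noteq> (g ^^ j) y"
proof
  assume eq: "(g ^^ i) x = (g ^^ j) y"
  have split: "p * Suc j = (p * Suc j - j) + j"
    using assms(1) by (cases p) auto
  have "y = (g ^^ (p * Suc j)) y"
    by (rule funpow_mult_fixpoint[OF assms(2), symmetric])
  also have "\<dots> = (g ^^ (p * Suc j - j)) ((g ^^ j) y)"
    by (metis split funpow_add comp_apply)
  also have "\<dots> = (g ^^ (p * Suc j - j + i)) x"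
    by (simp add: eq [symmetric] funpow_add)
  finally show False
    using assms(3) by blast
qed

lemma finite_disjoint_sets_separated:
  fixes A B :: "'a::metric_space set"
  assumes "finite A" "finite B" "A \<inter> B = {}"
  shows "\<exists>\<delta>>0. \<forall>a\<in>A. \<forall>b\<in>B. \<delta> \<le> dist a b"
proof (cases "A \<times> B = {}")
  case True
  then show ?thesis
    by (auto intro: exI[of _ 1])
next
  case False
  define D where "D = (\<lambda>(a, b). dist a b) ` (A \<times> B)"
  have "finite D" "D \<noteq> {}"
    using assms False by (auto simp: D_def)
  moreover have "0 < Min D"
    using \<open>finite D\<close> \<open>D \<noteq> {}\<close> assms(3) by (auto simp: D_def)
  moreover have "Min D \<le> dist a b" if "a \<in> A" "b \<in> B" for a b
    using Min_le[OF \<open>finite D\<close>] that by (force simp: D_def)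
  ultimately show ?thesis
    by blast
qed

text \<open>
  Two periodic points with disjoint orbits exist because the periodic points form
  an infinite set while each orbit is finite.
\<close>
lemma periodic_orbit_far_from_each_point:
  fixes g :: "'a::metric_space \<Rightarrow> 'a"
  assumes "infinite {x \<in> X. aut_periodic_point g x}"
  shows "\<exists>\<epsilon>>0. \<forall>x. \<exists>q\<in>X. aut_periodic_point g q \<and> (\<forall>i. \<epsilon> \<le> dist x ((g ^^ i) q))"
proof -
  let ?P = "{x \<in> X. aut_periodic_point g x}"
  let ?orbit = "\<lambda>q. range (\<lambda>i. (g ^^ i) q)"
  obtain q1 where q1: "q1 \<in> ?P"
    using assms infinite_imp_nonempty by blast
  then obtain p1 where "p1 > 0" "(g ^^ p1) q1 = q1"
    by (auto simp: aut_periodic_point_def)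
  then have fin1: "finite (?orbit q1)"
    by (rule finite_orbit_if_periodic)
  then obtain q2 where q2: "q2 \<in> ?P" "q2 \<notin> ?orbit q1"
    using Diff_infinite_finite[OF fin1 assms] infinite_imp_nonempty by blast
  then obtain p2 where p2: "p2 > 0" "(g ^^ p2) q2 = q2"
    by (auto simp: aut_periodic_point_def)
  have "?orbit q1 \<inter> ?orbit q2 = {}"
    using periodic_orbits_disjoint[OF p2 q2(2)] by blast
  then obtain \<delta> where \<delta>: "\<delta> > 0" "\<And>i j. \<delta> \<le> dist ((g ^^ i) q1) ((g ^^ j) q2)"
    using finite_disjoint_sets_separated[OF fin1 finite_orbit_if_periodic[OF p2]] by blast
  have far: "\<exists>q\<in>{q1, q2}. \<forall>i. \<delta> / 2 \<le> dist x ((g ^^ i) q)" for x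
  proof (rule ccontr)
    assume "\<not> ?thesis"
    then obtain i j where "dist x ((g ^^ i) q1) < \<delta> / 2" "dist x ((g ^^ j) q2) < \<delta> / 2"
      by (auto simp: not_le)
    then show False
      using dist_triangle3[of "(g ^^ i) q1" "(g ^^ j) q2" x] \<delta>(2)[of i j] by linarith
  qed
  have "\<exists>q\<in>X. aut_periodic_point g q \<and> (\<forall>i. \<delta> / 2 \<le> dist x ((g ^^ i) q))" for x
  proof -
    obtain q where "q \<in> {q1, q2}" "\<forall>i. \<delta> / 2 \<le> dist x ((g ^^ i) q)"
      using far by blast
    moreover have "q \<in> ?P"
      using \<open>q \<in> {q1, q2}\<close> q1 q2(1) by blast
    ultimately show ?thesis
      by blast
  qed
  then show ?thesis
    using \<delta>(1) by (intro exI[of _ "\<delta> / 2"]) simp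
qed

subsection \<open>Sensitivity of transitive maps with dense periodic points\<close>

definition aut_sensitive :: "'a::metric_space set \<Rightarrow> ('a \<Rightarrow> 'a) \<Rightarrow> bool" where
  "aut_sensitive X g \<longleftrightarrow>
     (\<exists>\<delta>>0. \<forall>x\<in>X. \<forall>U. openin (top_of_set X) U \<longrightarrow> x \<in> U \<longrightarrow>
        (\<exists>y\<in>U. \<exists>n. dist ((g ^^ n) x) ((g ^^ n) y) > \<delta>))"

lemma openin_Int_dense_nonempty:
  assumes "openin (top_of_set X) U" "U \<noteq> {}" "X \<subseteq> closure S" "S \<subseteq> X"
  shows "U \<inter> S \<noteq> {}"
proof -
  obtain T where "open T" "U = X \<inter> T"
    using assms(1) openin_open by blast
  then show ?thesis
    using assms(2-4) open_Int_closure_eq_empty[of T S] by blast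
qed

lemma continuous_on_funpow:
  assumes "continuous_on X g" "g ` X \<subseteq> X"
  shows "continuous_on X (g ^^ n)"
proof (induction n)
  case (Suc n)
  have "(g ^^ n) ` X \<subseteq> X"
    using assms(2) by (induction n) auto
  then show ?case
    using continuous_on_compose[OF Suc continuous_on_subset[OF assms(1)]] by auto
qed (simp add: continuous_on_id)

lemma continuous_on_finite_family_at:
  fixes h :: "'i \<Rightarrow> 'a::metric_space \<Rightarrow> 'b::metric_space"
  assumes "finite I" "\<And>i. i \<in> I \<Longrightarrow> continuous_on X (h i)" "q \<in> X" "\<delta> > 0"
  shows "\<exists>\<epsilon>>0. \<forall>z\<in>X. dist z q < \<epsilon> \<longrightarrow> (\<forall>i\<in>I. dist (h i z) (h i q) < \<delta>)"
  using assms(1,2)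
proof (induction I rule: finite_induct)
  case empty
  show ?case
    by (auto intro: exI[of _ 1])
next
  case (insert i I)
  then obtain \<epsilon> where "\<epsilon> > 0" "\<forall>z\<in>X. dist z q < \<epsilon> \<longrightarrow> (\<forall>j\<in>I. dist (h j z) (h j q) < \<delta>)"
    by blast
  moreover obtain \<epsilon>' where "\<epsilon>' > 0" "\<forall>z\<in>X. dist z q < \<epsilon>' \<longrightarrow> dist (h i z) (h i q) < \<delta>"
    using insert.prems[of i] assms(3,4) unfolding continuous_on_iff by blast
  ultimately show ?case
    by (intro exI[of _ "min \<epsilon> \<epsilon>'"]) auto
qed

lemma infinite_if_dense_in_infinite:
  fixes S :: "'a::t1_space set"
  assumes "infinite X" "X \<subseteq> closure S"
  shows "infinite S"
proof
  assume "finite S"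
  then have "X \<subseteq> S"
    using assms(2) by (simp add: finite_imp_closed)
  then show False
    using assms(1) \<open>finite S\<close> finite_subset by blast
qed

lemma exists_pair_separated_in_open:
  fixes g :: "'a::metric_space \<Rightarrow> 'a"
  assumes cont: "continuous_on X g" "g ` X \<subseteq> X"
    and trans: "aut_transitive X g" and dense: "aut_dense_periodic X g"
    and "\<delta> > 0" and q: "q \<in> X" "\<And>i. 4 * \<delta> \<le> dist x ((g ^^ i) q)"
    and x: "x \<in> U" and U: "openin (top_of_set X) U"
  shows "\<exists>p\<in>U. \<exists>y\<in>U. \<exists>N. 2 * \<delta> < dist ((g ^^ N) p) ((g ^^ N) y)"
proof -
  define U' where "U' = U \<inter> ball x \<delta>"
  have U': "openin (top_of_set X) U'" "x \<in> U'"
    using U x \<open>\<delta> > 0\<close> by (simp_all add: U'_def openin_Int_open)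
  have "X \<subseteq> closure {x \<in> X. aut_periodic_point g x}"
    using dense by (simp add: aut_dense_periodic_def)
  then have "U' \<inter> {x \<in> X. aut_periodic_point g x} \<noteq> {}"
    by (rule openin_Int_dense_nonempty[OF U'(1), rotated]) (use U'(2) in auto)
  then obtain p n where p: "p \<in> U'" "n > 0" "(g ^^ n) p = p"
    by (auto simp: aut_periodic_point_def)
  obtain \<eta> where \<eta>: "\<eta> > 0"
    "\<forall>z\<in>X. dist z q < \<eta> \<longrightarrow> (\<forall>i\<in>{..n}. dist ((g ^^ i) z) ((g ^^ i) q) < \<delta>)"
    using continuous_on_finite_family_at[of "{..n}" X "\<lambda>i. g ^^ i" q \<delta>]
      continuous_on_funpow[OF cont] q(1) \<open>\<delta> > 0\<close> by auto
  define V where "V = X \<inter> ball q \<eta>"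
  have V: "openin (top_of_set X) V" "q \<in> V"
    using q(1) \<eta>(1) by (simp_all add: V_def openin_open_Int)
  obtain k y where y: "y \<in> U'" "(g ^^ k) y \<in> V"
    using trans U' V unfolding aut_transitive_def by blast
  define N where "N = n * (k div n + 1)"
  have "N = n * (k div n) + n" "k = n * (k div n) + k mod n" "k mod n < n"
    using p(2) by (simp_all add: N_def)
  then have "k \<le> N" "N - k \<le> n"
    by linarith+
  then have "(g ^^ N) y = (g ^^ (N - k)) ((g ^^ k) y)"
    by (metis funpow_add comp_apply le_add_diff_inverse2)
  moreover have "(g ^^ k) y \<in> X" "dist ((g ^^ k) y) q < \<eta>"
    using y(2) by (auto simp: V_def dist_commute)
  ultimately have "dist ((g ^^ N) y) ((g ^^ (N - k)) q) < \<delta>"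
    using \<eta>(2) \<open>N - k \<le> n\<close> by simp
  moreover have "dist x p < \<delta>"
    using p(1) by (simp add: U'_def)
  ultimately have "2 * \<delta> < dist p ((g ^^ N) y)"
    using q(2)[of "N - k"] dist_triangle[of x "(g ^^ (N - k)) q" p]
      dist_triangle[of p "(g ^^ (N - k)) q" "(g ^^ N) y"] by linarith
  moreover have "(g ^^ N) p = p"
    unfolding N_def by (rule funpow_mult_fixpoint[OF p(3)])
  ultimately have "2 * \<delta> < dist ((g ^^ N) p) ((g ^^ N) y)"
    by simp
  then show ?thesis
    using p(1) y(1) unfolding U'_def by blast
qed

theorem aut_sensitive_if_transitive_dense_periodic:
  fixes g :: "'a::metric_space \<Rightarrow> 'a"
  assumes cont: "continuous_on X g" "g ` X \<subseteq> X" and "infinite X"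
    and trans: "aut_transitive X g" and dense: "aut_dense_periodic X g"
  shows "aut_sensitive X g"
proof -
  have "infinite {x \<in> X. aut_periodic_point g x}"
    using infinite_if_dense_in_infinite \<open>infinite X\<close> dense
    unfolding aut_dense_periodic_def by blast
  then obtain \<epsilon> where "\<epsilon> > 0" and far:
    "\<And>x. \<exists>q\<in>X. aut_periodic_point g q \<and> (\<forall>i. \<epsilon> \<le> dist x ((g ^^ i) q))"
    using periodic_orbit_far_from_each_point by blast
  define \<delta> where "\<delta> = \<epsilon> / 4"
  have "\<delta> > 0"
    using \<open>\<epsilon> > 0\<close> by (simp add: \<delta>_def)
  have "\<exists>y\<in>U. \<exists>N. \<delta> < dist ((g ^^ N) x) ((g ^^ N) y)"
    if hyps: "x \<in> U" "openin (top_of_set X) U" for x U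
  proof -
    obtain q where q: "q \<in> X" "\<And>i. 4 * \<delta> \<le> dist x ((g ^^ i) q)"
      using far[of x] by (auto simp: \<delta>_def)
    then obtain p y N where "p \<in> U" "y \<in> U" and "2 * \<delta> < dist ((g ^^ N) p) ((g ^^ N) y)"
      using exists_pair_separated_in_open[OF cont trans dense \<open>\<delta> > 0\<close> q hyps] by blast
    then have "\<delta> < dist ((g ^^ N) x) ((g ^^ N) p) \<or> \<delta> < dist ((g ^^ N) x) ((g ^^ N) y)"
      using dist_triangle3[of "(g ^^ N) p" "(g ^^ N) y" "(g ^^ N) x"] by linarith
    then show ?thesis
      using \<open>p \<in> U\<close> \<open>y \<in> U\<close> by blast
  qed
  then show ?thesis
    unfolding aut_sensitive_def using \<open>\<delta> > 0\<close> by blast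
qed

subsection \<open>Periodic non-autonomous systems\<close>

lemma nas_iter_add_period:
  assumes "\<And>n. n > 0 \<Longrightarrow> f (n + m) = f n"
  shows "nas_iter f (n + m) = nas_iter f n \<circ> nas_iter f m"
proof (induction n)
  case (Suc n)
  then show ?case
    using assms[of "Suc n"] by (simp add: comp_assoc)
qed simp

lemma nas_iter_mult_period:
  assumes "\<And>n. n > 0 \<Longrightarrow> f (n + m) = f n"
  shows "nas_iter f (k * m) = nas_iter f m ^^ k"
proof (induction k)
  case (Suc k)
  have "nas_iter f (Suc k * m) = nas_iter f (k * m) \<circ> nas_iter f m"
    using nas_iter_add_period[of f m, OF assms, of "k * m"] by (simp add: add.commute)
  then show ?case
    using Suc.IH by (metis funpow_Suc_right)
qed simp

lemma nas_iter_image_subset: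
  assumes "\<And>n. n > 0 \<Longrightarrow> f n ` X \<subseteq> X"
  shows "nas_iter f n ` X \<subseteq> X"
  by (induction n) (use assms in auto)

lemma continuous_on_nas_iter:
  assumes "\<And>n. n > 0 \<Longrightarrow> continuous_on X (f n)" "\<And>n. n > 0 \<Longrightarrow> f n ` X \<subseteq> X"
  shows "continuous_on X (nas_iter f n)"
proof (induction n)
  case (Suc n)
  then show ?case
    using continuous_on_compose[OF Suc continuous_on_subset[OF assms(1)[of "Suc n", simplified]]]
      nas_iter_image_subset[OF assms(2)] by simp
qed (simp add: continuous_on_id)

context
  fixes f :: "nat \<Rightarrow> 'a::metric_space \<Rightarrow> 'a" and m :: nat
  assumes period: "\<And>n. n > 0 \<Longrightarrow> f (n + m) = f n" and "m > 0"
begin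

lemma nas_transitive_if_aut_transitive:
  assumes "aut_transitive X (nas_iter f m)"
  shows "nas_transitive X f"
  using assms \<open>m > 0\<close> unfolding aut_transitive_def nas_transitive_def
  by (metis nas_iter_mult_period[of f m, OF period] nat_0_less_mult_iff)

lemma nas_periodic_point_if_aut_periodic_point:
  assumes "aut_periodic_point (nas_iter f m) x"
  shows "nas_periodic_point f x"
proof -
  obtain n where "n > 0" "(nas_iter f m ^^ n) x = x"
    using assms by (auto simp: aut_periodic_point_def)
  then have "nas_iter f (n * m * k) x = x" for k
    using funpow_mult_fixpoint[where p = n and x = x and k = k]
      nas_iter_mult_period[of f m, OF period, of "n * k"] by (simp add: ac_simps)
  then show ?thesis
    using \<open>n > 0\<close> \<open>m > 0\<close> unfolding nas_periodic_point_def by (intro exI[of _ "n * m"]) auto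
qed

lemma nas_dense_periodic_if_aut_dense_periodic:
  assumes "aut_dense_periodic X (nas_iter f m)"
  shows "nas_dense_periodic X f"
proof -
  have "{x \<in> X. aut_periodic_point (nas_iter f m) x} \<subseteq> {x \<in> X. nas_periodic_point f x}"
    using nas_periodic_point_if_aut_periodic_point by blast
  then show ?thesis
    using assms closure_mono
    unfolding aut_dense_periodic_def nas_dense_periodic_def by blast
qed

lemma nas_sensitive_if_aut_sensitive:
  assumes "aut_sensitive X (nas_iter f m)"
  shows "nas_sensitive X f"
  using assms unfolding aut_sensitive_def nas_sensitive_def
  by (metis nas_iter_mult_period[of f m, OF period])

end

theorem mainTheorem17:
  fixes X :: "'a::metric_space set" and f :: "nat \<Rightarrow> 'a \<Rightarrow> 'a" and m :: nat
  assumes "compact X"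
    and "infinite X"
    and "m > 0"
    and "\<And>n. n > 0 \<Longrightarrow> f (n + m) = f n"
    and "\<And>n. n > 0 \<Longrightarrow> continuous_on X (f n)"
    and "\<And>n. n > 0 \<Longrightarrow> f n ` X = X"
    and "aut_transitive X (nas_iter f m)"
    and "aut_dense_periodic X (nas_iter f m)"
  shows "nas_devaney_chaotic X f"
proof -
  have maps_into: "\<And>n. n > 0 \<Longrightarrow> f n ` X \<subseteq> X"
    using assms(6) by simp
  have "aut_sensitive X (nas_iter f m)"
    using continuous_on_nas_iter[OF assms(5) maps_into] nas_iter_image_subset[OF maps_into]
      assms(2,7,8) by (rule aut_sensitive_if_transitive_dense_periodic)
  then show ?thesis
    using assms(3,4,7,8) unfolding nas_devaney_chaotic_def
    by (metis nas_transitive_if_aut_transitive nas_dense_periodic_if_aut_dense_periodic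
        nas_sensitive_if_aut_sensitive)
qed

end
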